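(* Let $(\ell_{i:n})_{0\le i\le n\le m}$ be reals with $\ell_{0:n}=-1$, $n\mapsto\ell_{i:n}$ nonincreasing and $i\mapsto\ell_{i:n}$ nondecreasing, and let $\varphi_A=\max_{1\le i\le|A|}\mathbf 1\{p_{(i:A)}\le\ell_{i:|A|}\}$ ($\varphi_\emptyset=0$). Assume this is a family of local tests at level $\alpha$: for all $\mu\in\mathfrak F$, $\mathbb P_\mu(\varphi_{\mathcal H_0(\mu)}=1)\le\alpha$. Let $$\hat m_0=\max\{n\in\{0,\dots,m\}:\forall t\in[0,1],\ t>\ell_{((n+i(t)-m)\vee0):n}\},$$ and the reference family $\mathfrak R=(R_k,k-1)_{1\le k\le\hat m_0+1}$ with $R_k=\{i:p_i\le\ell_{k:\hat m_0}\}$ for $1\le k\le\hat m_0$ and $R_{\hat m_0+1}=\{1,\dots,m\}$. Then $\mathrm{JER}_\mu(\mathfrak R)\le\alpha$ for all $\mu\in\mathfrak F$, and $\hat V^{\mathrm{IP}}_\varphi(S)=\hat V^{\mathrm{JER}}_{\mathfrak R}(S)$ for all $S\subseteq\{1,\dots,m\}$.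
   Context: Data $X\sim\mu\in\mathfrak F$, null hypotheses $H_1,\dots,H_m\subseteq\mathfrak F$, $\mathcal H_0(\mu)=\{i:\mu\in H_i\}$, $p$-values $p_i\in[0,1]$; $p_{(i:A)}$ is the $i$-th smallest of $(p_j)_{j\in A}$; $i(t)=\#\{j:p_j\le t\}$. Inversion bound: $\hat V^{\mathrm{IP}}_\varphi(S)=\max\{|A\cap S|:A\subseteq\{1,\dots,m\},\varphi_A=0\}$. For a reference family $\mathfrak R=(R_k,\zeta_k)_{k\in\mathcal K}$: $\mathrm{JER}_\mu(\mathfrak R)=\mathbb P_\mu(\exists k:|R_k\cap\mathcal H_0(\mu)|>\zeta_k)$, $\mathfrak A(\mathfrak R)=\{A\subseteq\{1,\dots,m\}:\forall k,\ |R_k\cap A|\le\zeta_k\}$, $\hat V^{\mathrm{JER}}_{\mathfrak R}(S)=\max_{A\in\mathfrak A(\mathfrak R)}|S\cap A|$. *)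

theory Defs
  imports "HOL-Probability.Probability"
begin

text \<open>Hypothesis indices are 1..m. A p-value vector is q :: nat => real.\<close>

definition pord :: "(nat \<Rightarrow> real) \<Rightarrow> nat set \<Rightarrow> nat \<Rightarrow> real" where
  "pord q A i = sort (map q (sorted_list_of_set A)) ! (i - 1)"

text \<open>Local test phi_A = max over 1<=i<=|A| of 1{p_(i:A) <= l_(i:|A|)}, as a bool (True = reject).\<close>
definition phi :: "(nat \<Rightarrow> nat \<Rightarrow> real) \<Rightarrow> (nat \<Rightarrow> real) \<Rightarrow> nat set \<Rightarrow> bool" where
  "phi l q A = (\<exists>i\<in>{1..card A}. pord q A i \<le> l i (card A))"

definition icount :: "nat \<Rightarrow> (nat \<Rightarrow> real) \<Rightarrow> real \<Rightarrow> nat" where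
  "icount m q t = card {j \<in> {1..m}. q j \<le> t}"

text \<open>Nat subtraction truncates at 0, giving (n + i(t) - m) v 0.\<close>
definition mhat0 :: "(nat \<Rightarrow> nat \<Rightarrow> real) \<Rightarrow> nat \<Rightarrow> (nat \<Rightarrow> real) \<Rightarrow> nat" where
  "mhat0 l m q = Max {n \<in> {0..m}. \<forall>t\<in>{0..1}. t > l (n + icount m q t - m) n}"

definition Rref :: "(nat \<Rightarrow> nat \<Rightarrow> real) \<Rightarrow> nat \<Rightarrow> (nat \<Rightarrow> real) \<Rightarrow> nat \<Rightarrow> nat set" where
  "Rref l m q k = (if k \<le> mhat0 l m q then {i \<in> {1..m}. q i \<le> l k (mhat0 l m q)} else {1..m})"

definition V_IP :: "nat \<Rightarrow> (nat set \<Rightarrow> bool) \<Rightarrow> nat set \<Rightarrow> nat" where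
  "V_IP m \<phi> S = Max {card (A \<inter> S) | A. A \<subseteq> {1..m} \<and> \<not> \<phi> A}"

definition JER_event :: "nat set \<Rightarrow> (nat \<Rightarrow> nat set) \<Rightarrow> (nat \<Rightarrow> nat) \<Rightarrow> nat set \<Rightarrow> bool" where
  "JER_event K R \<zeta> H0 = (\<exists>k\<in>K. card (R k \<inter> H0) > \<zeta> k)"

definition Aset :: "nat \<Rightarrow> nat set \<Rightarrow> (nat \<Rightarrow> nat set) \<Rightarrow> (nat \<Rightarrow> nat) \<Rightarrow> nat set set" where
  "Aset m K R \<zeta> = {A. A \<subseteq> {1..m} \<and> (\<forall>k\<in>K. card (R k \<inter> A) \<le> \<zeta> k)}"

definition V_JER :: "nat \<Rightarrow> nat set \<Rightarrow> (nat \<Rightarrow> nat set) \<Rightarrow> (nat \<Rightarrow> nat) \<Rightarrow> nat set \<Rightarrow> nat" where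
  "V_JER m K R \<zeta> S = Max ((\<lambda>A. card (S \<inter> A)) ` Aset m K R \<zeta>)"

end

theory Submission
  imports Defs
begin

text \<open>A set \<open>A\<close> escapes rejection by \<open>\<phi>\<close> iff \<open>#{i \<in> A. p_i \<le> \<ell>_{k:|A|}} < k\<close> for all \<open>k\<close>.
  The reference family is built so that \<open>\<AA>(\<RR>)\<close> consists exactly of the sets of size at most
  \<open>M = mhat0\<close> that pass the same test with the critical values \<open>\<ell>_{k:M}\<close>.

  Every set not rejected by \<open>\<phi>\<close> lies in \<open>\<AA>(\<RR>)\<close>: if \<open>|A| > M\<close>, maximality of \<open>M\<close> yields a
  threshold \<open>t\<close> below which \<open>A\<close> already has \<open>|A| + i(t) - m\<close> p-values, enough for a
  rejection; and for \<open>|A| \<le> M\<close> the critical values only decrease from size \<open>|A|\<close> to \<open>M\<close>.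
  So the JER event implies that \<open>\<phi>\<close> rejects the true nulls, and the first claim follows from
  the level of the local test. Conversely every member of \<open>\<AA>(\<RR>)\<close> grows to a set of size
  \<open>M\<close> that \<open>\<phi>\<close> does not reject, by repeatedly adding the remaining hypothesis with the
  largest p-value: the defining inequality of \<open>M\<close> at \<open>t = \<ell>_{k:M}\<close> shows that this never
  creates a rejection. Hence both bounds maximise \<open>|S \<inter> A|\<close> over families that dominate
  each other.\<close>

lemma sorted_nth_le_iff_less_length_filter:
  fixes xs :: "'a::linorder list"
  assumes "sorted xs" "i < length xs"
  shows "xs ! i \<le> c \<longleftrightarrow> i < length (filter (\<lambda>v. v \<le> c) xs)"
  using assms
proof (induction xs arbitrary: i)
  case Nil
  then show ?case by simp
next
  case (Cons x xs)
  show ?case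
  proof (cases "x \<le> c")
    case True
    then show ?thesis using Cons by (cases i) auto
  next
    case False
    then have "\<forall>v\<in>set (x # xs). \<not> v \<le> c" using Cons.prems(1) by auto
    moreover have "(x # xs) ! i \<in> set (x # xs)" using Cons.prems(2) by (rule nth_mem)
    ultimately show ?thesis by (auto simp: filter_empty_conv)
  qed
qed

lemma pord_le_iff:
  assumes "finite A" "1 \<le> i" "i \<le> card A"
  shows "pord q A i \<le> c \<longleftrightarrow> i \<le> card {j\<in>A. q j \<le> c}"
proof -
  define xs where "xs = sort (map q (sorted_list_of_set A))"
  have "length (filter (\<lambda>v. v \<le> c) xs) = length (filter (\<lambda>v. v \<le> c) (map q (sorted_list_of_set A)))"
    unfolding xs_def by (metis mset_filter mset_sort size_mset)
  also have "\<dots> = card {j\<in>A. q j \<le> c}"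
    using assms(1) by (simp add: filter_map comp_def distinct_length_filter Int_def conj_commute)
  finally have "length (filter (\<lambda>v. v \<le> c) xs) = card {j\<in>A. q j \<le> c}" .
  moreover have "pord q A i \<le> c \<longleftrightarrow> i - 1 < length (filter (\<lambda>v. v \<le> c) xs)"
    using assms unfolding pord_def xs_def by (intro sorted_nth_le_iff_less_length_filter) auto
  ultimately show ?thesis using assms(2) by linarith
qed

definition accepted :: "(nat \<Rightarrow> nat \<Rightarrow> real) \<Rightarrow> (nat \<Rightarrow> real) \<Rightarrow> nat \<Rightarrow> nat set \<Rightarrow> bool" where
  "accepted l q n A \<longleftrightarrow> (\<forall>k\<in>{1..n}. card {i\<in>A. q i \<le> l k n} < k)"

lemma phi_iff_not_accepted:
  assumes "finite A"
  shows "phi l q A \<longleftrightarrow> \<not> accepted l q (card A) A"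
  using pord_le_iff[OF assms] unfolding phi_def accepted_def by (auto simp: not_less)

lemma measurable_phi_event:
  assumes "finite A" "\<And>j. j \<in> A \<Longrightarrow> (\<lambda>x. p x j) \<in> borel_measurable M"
  shows "{x\<in>space M. phi l (p x) A} \<in> sets M"
proof -
  have count: "(\<Sum>j\<in>A. indicator {..c} (p x j)) = real (card {j\<in>A. p x j \<le> c})" for x c
    using assms(1) by (simp add: indicator_def Collect_conj_eq)
  have "phi l (p x) A \<longleftrightarrow> (\<exists>k\<in>{1..card A}. real k \<le> (\<Sum>j\<in>A. indicator {..l k (card A)} (p x j)))"
    for x
    using assms(1) unfolding phi_def count by (simp add: pord_le_iff)
  then show ?thesis using assms by simp measurable
qed

lemma Max_image_eq_if_dominated:
  fixes f :: "'a \<Rightarrow> 'b::linorder"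
  assumes "finite Y" "X \<subseteq> Y" "X \<noteq> {}" "\<And>y. y \<in> Y \<Longrightarrow> \<exists>x\<in>X. f y \<le> f x"
  shows "Max (f ` X) = Max (f ` Y)"
proof (rule antisym)
  show "Max (f ` X) \<le> Max (f ` Y)" using assms(1-3) by (intro Max_mono) auto
  have "Max (f ` Y) \<in> f ` Y" using assms(1-3) by (intro Max_in) auto
  then obtain y where "y \<in> Y" "Max (f ` Y) = f y" by auto
  with assms(4) obtain x where x: "x \<in> X" and le: "Max (f ` Y) \<le> f x" by auto
  have "f x \<le> Max (f ` X)" using x assms(1,2) by (intro Max_ge) (auto intro: finite_subset)
  with le show "Max (f ` Y) \<le> Max (f ` X)" by (rule order_trans)
qed

lemma icount_le: "icount m q t \<le> m"
proof -
  have "icount m q t \<le> card {1..m}" unfolding icount_def by (rule card_mono) auto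
  then show ?thesis by simp
qed

lemma icount_split:
  assumes "A \<subseteq> {1..m}"
  shows "icount m q t = card {i\<in>A. q i \<le> t} + card {i\<in>{1..m} - A. q i \<le> t}"
proof -
  have split: "{j\<in>{1..m}. q j \<le> t} = {i\<in>A. q i \<le> t} \<union> {i\<in>{1..m} - A. q i \<le> t}"
    using assms by auto
  have "finite A" using assms finite_subset by blast
  then show ?thesis unfolding icount_def split by (intro card_Un_disjoint) auto
qed

lemma mhat0_mem:
  assumes "l 0 0 < 0"
  shows "mhat0 l m q \<in> {n \<in> {0..m}. \<forall>t\<in>{0..1}. t > l (n + icount m q t - m) n}"
  unfolding mhat0_def using assms icount_le[of m q] by (intro Max_in) (auto intro!: exI[of _ 0])

lemma mhat0_le: "l 0 0 < 0 \<Longrightarrow> mhat0 l m q \<le> m"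
  using mhat0_mem by auto

lemma crit_at_mhat0_less:
  "l 0 0 < 0 \<Longrightarrow> t \<in> {0..1} \<Longrightarrow> l (mhat0 l m q + icount m q t - m) (mhat0 l m q) < t"
  using mhat0_mem by blast

lemma mhat0_maximal:
  assumes "mhat0 l m q < n" "n \<le> m"
  obtains t where "t \<in> {0..1}" "t \<le> l (n + icount m q t - m) n"
proof -
  have "\<not> (\<forall>t\<in>{0..1}. t > l (n + icount m q t - m) n)"
  proof
    assume "\<forall>t\<in>{0..1}. t > l (n + icount m q t - m) n"
    then have "n \<le> mhat0 l m q" unfolding mhat0_def using assms(2) by (intro Max_ge) auto
    then show False using assms(1) by simp
  qed
  then show ?thesis using that by (auto simp: not_less)
qed

lemma Aset_eq_not_JER_event:
  "Aset m K R \<zeta> = {A. A \<subseteq> {1..m} \<and> \<not> JER_event K R \<zeta> A}"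
  unfolding Aset_def JER_event_def by (auto simp: not_less)

lemma JER_event_mhat0_iff:
  assumes "A \<subseteq> {1..m}"
  shows "JER_event {1..mhat0 l m q + 1} (Rref l m q) (\<lambda>k. k - 1) A
     \<longleftrightarrow> \<not> (card A \<le> mhat0 l m q \<and> accepted l q (mhat0 l m q) A)"
proof -
  let ?M = "mhat0 l m q"
  have R: "Rref l m q k \<inter> A = (if k \<le> ?M then {i\<in>A. q i \<le> l k ?M} else A)" for k
    using assms unfolding Rref_def by auto
  have "JER_event {1..?M + 1} (Rref l m q) (\<lambda>k. k - 1) A
      \<longleftrightarrow> (\<exists>k\<in>{1..?M + 1}. k \<le> card (Rref l m q k \<inter> A))"
    unfolding JER_event_def by (intro bex_cong) auto
  also have "\<dots> \<longleftrightarrow> ?M < card A \<or> (\<exists>k\<in>{1..?M}. k \<le> card {i\<in>A. q i \<le> l k ?M})"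
  proof -
    have "{1..?M + 1} = insert (?M + 1) {1..?M}" by auto
    then show ?thesis unfolding R by (simp add: Suc_le_eq)
  qed
  finally show ?thesis unfolding accepted_def by (auto simp: not_less)
qed

locale critical_values =
  fixes m :: nat and l :: "nat \<Rightarrow> nat \<Rightarrow> real"
  assumes l_0: "\<And>n. n \<le> m \<Longrightarrow> l 0 n = -1"
    and l_antimono_size: "\<And>i n n'. i \<le> n \<Longrightarrow> n \<le> n' \<Longrightarrow> n' \<le> m \<Longrightarrow> l i n' \<le> l i n"
    and l_mono_rank: "\<And>i i' n. i \<le> i' \<Longrightarrow> i' \<le> n \<Longrightarrow> n \<le> m \<Longrightarrow> l i n \<le> l i' n"
begin

lemma l_0_0_neg: "l 0 0 < 0"
  using l_0 by simp

lemma accepted_mono_size: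
  assumes "finite A" "card A \<le> n" "n \<le> n'" "n' \<le> m" "accepted l q n A"
  shows "accepted l q n' A"
  unfolding accepted_def
proof
  fix k assume k: "k \<in> {1..n'}"
  show "card {i\<in>A. q i \<le> l k n'} < k"
  proof (cases "k \<le> n")
    case True
    have "card {i\<in>A. q i \<le> l k n'} \<le> card {i\<in>A. q i \<le> l k n}"
      using assms(1,3,4) l_antimono_size[of k n n'] True by (intro card_mono) auto
    moreover have "card {i\<in>A. q i \<le> l k n} < k" using assms(5) k True unfolding accepted_def by auto
    ultimately show ?thesis by linarith
  next
    case False
    have "card {i\<in>A. q i \<le> l k n'} \<le> card A" using assms(1) by (intro card_mono) auto
    then show ?thesis using assms(2) False by linarith
  qed
qed

lemma card_le_mhat0_if_not_phi:
  assumes A: "A \<subseteq> {1..m}" and not_phi: "\<not> phi l q A"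
  shows "card A \<le> mhat0 l m q"
proof (rule ccontr)
  have fin: "finite A" using A finite_subset by blast
  have "card A \<le> card {1..m}" using A by (intro card_mono) auto
  then have card_le: "card A \<le> m" by simp
  assume "\<not> card A \<le> mhat0 l m q"
  then have "mhat0 l m q < card A" by simp
  with card_le obtain t where t: "t \<in> {0..1}" "t \<le> l (card A + icount m q t - m) (card A)"
    using mhat0_maximal by blast
  define j where "j = card A + icount m q t - m"
  have "j \<noteq> 0" using t l_0[OF card_le] unfolding j_def by auto
  moreover have "j \<le> card A" unfolding j_def using icount_le[of m q t] by simp
  moreover have "j \<le> card {i\<in>A. q i \<le> l j (card A)}"
  proof -
    have "card {i\<in>{1..m} - A. q i \<le> t} \<le> card ({1..m} - A)" by (intro card_mono) auto
    also have "\<dots> = m - card A" using A fin by (simp add: card_Diff_subset)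
    finally have "j \<le> card {i\<in>A. q i \<le> t}"
      using card_le unfolding j_def icount_split[OF A] by linarith
    also have "\<dots> \<le> card {i\<in>A. q i \<le> l j (card A)}"
      using fin t(2) unfolding j_def by (intro card_mono) auto
    finally show ?thesis .
  qed
  ultimately have "\<not> accepted l q (card A) A" unfolding accepted_def by (auto simp: not_less)
  then show False using not_phi phi_iff_not_accepted[OF fin] by blast
qed

lemma accepted_mhat0_if_not_phi:
  assumes A: "A \<subseteq> {1..m}" and not_phi: "\<not> phi l q A"
  shows "card A \<le> mhat0 l m q \<and> accepted l q (mhat0 l m q) A"
proof -
  have fin: "finite A" using A finite_subset by blast
  have "card A \<le> mhat0 l m q" using card_le_mhat0_if_not_phi[OF assms] .
  moreover have "accepted l q (card A) A" using not_phi phi_iff_not_accepted[OF fin] by blast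
  ultimately show ?thesis
    using accepted_mono_size[OF fin] mhat0_le[of l, OF l_0_0_neg] by blast
qed

lemma icount_critical_value_less:
  assumes q: "range q \<subseteq> {0..1}" and k: "1 \<le> k" "k \<le> mhat0 l m q"
  shows "icount m q (l k (mhat0 l m q)) + mhat0 l m q < m + k"
proof -
  let ?M = "mhat0 l m q"
  define c where "c = l k ?M"
  have q01: "0 \<le> q j" "q j \<le> 1" for j using range_subsetD[OF q, of j] by auto
  have M: "?M \<le> m" using mhat0_le[of l, OF l_0_0_neg] .
  have l_le: "l k ?M \<le> l j ?M" if "k \<le> j" "j \<le> ?M" for j
    using l_mono_rank that M by simp
  consider "c < 0" | "0 \<le> c" "c \<le> 1" | "1 < c" by linarith
  then show ?thesis
  proof cases
    case 1
    then have "\<not> q j \<le> c" for j using q01(1)[of j] by linarith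
    then have "icount m q c = 0" unfolding icount_def by simp
    then show ?thesis using M k unfolding c_def by simp
  next
    case 2
    define j where "j = ?M + icount m q c - m"
    have "l j ?M < c" using crit_at_mhat0_less[of l, OF l_0_0_neg] 2 unfolding j_def by simp
    moreover have "j \<le> ?M" unfolding j_def using icount_le[of m q c] by simp
    ultimately have "j < k" using l_le unfolding c_def by (meson not_le not_less)
    then show ?thesis using k unfolding j_def c_def by linarith
  next
    case 3
    have "{j\<in>{1..m}. q j \<le> 1} = {1..m}" using q01(2) by auto
    then have "icount m q 1 = m" unfolding icount_def by simp
    then have "l ?M ?M < 1" using crit_at_mhat0_less[of l, OF l_0_0_neg, of 1 m q] by simp
    then show ?thesis using 3 l_le[of ?M] k unfolding c_def by simp
  qed
qed

lemma accepted_insert_max: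
  assumes q: "range q \<subseteq> {0..1}"
    and A: "A \<subseteq> {1..m}" "card A < mhat0 l m q" "accepted l q (mhat0 l m q) A"
    and e: "e \<in> {1..m} - A" "\<And>e'. e' \<in> {1..m} - A \<Longrightarrow> q e' \<le> q e"
  shows "accepted l q (mhat0 l m q) (insert e A)"
  unfolding accepted_def
proof
  let ?M = "mhat0 l m q"
  fix k assume k: "k \<in> {1..?M}"
  define c where "c = l k ?M"
  have fin: "finite A" using A(1) finite_subset by blast
  have less: "card {i\<in>A. q i \<le> c} < k" using A(3) k unfolding accepted_def c_def by blast
  show "card {i\<in>insert e A. q i \<le> l k ?M} < k"
  proof (cases "q e \<le> c")
    case False
    then have "{i\<in>insert e A. q i \<le> l k ?M} = {i\<in>A. q i \<le> c}" unfolding c_def by auto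
    then show ?thesis using less by simp
  next
    case True
    then have "{i\<in>{1..m} - A. q i \<le> c} = {1..m} - A" using order_trans[OF e(2) True] by auto
    then have "icount m q c = card {i\<in>A. q i \<le> c} + (m - card A)"
      using icount_split[OF A(1)] A(1) fin by (simp add: card_Diff_subset)
    moreover have "icount m q c + ?M < m + k"
      using icount_critical_value_less[OF q] k unfolding c_def by simp
    moreover have "{i\<in>insert e A. q i \<le> l k ?M} = insert e {i\<in>A. q i \<le> c}"
      using True unfolding c_def by auto
    ultimately show ?thesis using e(1) fin A(2) by auto
  qed
qed

lemma accepted_extend_to_mhat0:
  assumes q: "range q \<subseteq> {0..1}"
    and A: "A \<subseteq> {1..m}" "card A \<le> mhat0 l m q" "accepted l q (mhat0 l m q) A"
  shows "\<exists>A'. A \<subseteq> A' \<and> A' \<subseteq> {1..m} \<and> card A' = mhat0 l m q \<and> accepted l q (mhat0 l m q) A'"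
  using A
proof (induction "mhat0 l m q - card A" arbitrary: A)
  case 0
  then show ?case by auto
next
  case (Suc d)
  let ?C = "{1..m} - A"
  have fin: "finite A" using Suc.prems(1) finite_subset by blast
  have "card A < m" using Suc.hyps(2) mhat0_le[of l m q, OF l_0_0_neg] by linarith
  then have "?C \<noteq> {}" using card_mono[OF fin, of "{1..m}"] by auto
  then have "Max (q ` ?C) \<in> q ` ?C" by (intro Max_in) auto
  then obtain e where e: "e \<in> ?C" "q e = Max (q ` ?C)" by auto
  then have e_max: "q e' \<le> q e" if "e' \<in> ?C" for e' using that by simp
  have "accepted l q (mhat0 l m q) (insert e A)"
    using accepted_insert_max[OF q Suc.prems(1) _ Suc.prems(3) e(1) e_max] Suc.hyps(2) by simp
  moreover have "d = mhat0 l m q - card (insert e A)" "insert e A \<subseteq> {1..m}"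
    "card (insert e A) \<le> mhat0 l m q"
    using Suc.hyps(2) Suc.prems(1) e(1) fin by auto
  ultimately obtain A' where "insert e A \<subseteq> A'" "A' \<subseteq> {1..m}" "card A' = mhat0 l m q"
      "accepted l q (mhat0 l m q) A'"
    using Suc.hyps(1) by blast
  then show ?case by blast
qed

lemma V_IP_eq_V_JER_mhat0:
  assumes q: "range q \<subseteq> {0..1}"
  shows "V_IP m (phi l q) S = V_JER m {1..mhat0 l m q + 1} (Rref l m q) (\<lambda>k. k - 1) S"
proof -
  let ?M = "mhat0 l m q"
  let ?N = "{A. A \<subseteq> {1..m} \<and> \<not> phi l q A}"
  let ?\<AA> = "Aset m {1..?M + 1} (Rref l m q) (\<lambda>k. k - 1)"
  have \<AA>_eq: "?\<AA> = {A. A \<subseteq> {1..m} \<and> card A \<le> ?M \<and> accepted l q ?M A}"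
    unfolding Aset_eq_not_JER_event using JER_event_mhat0_iff by blast
  have "?N \<subseteq> ?\<AA>" unfolding \<AA>_eq using accepted_mhat0_if_not_phi by blast
  moreover have "finite ?\<AA>" unfolding \<AA>_eq by (rule finite_subset[of _ "Pow {1..m}"]) auto
  moreover have "{} \<in> ?N" unfolding phi_def by simp
  moreover have "\<exists>A'\<in>?N. card (S \<inter> A) \<le> card (S \<inter> A')" if "A \<in> ?\<AA>" for A
  proof -
    have A: "A \<subseteq> {1..m}" "card A \<le> ?M" "accepted l q ?M A" using that unfolding \<AA>_eq by auto
    obtain A' where A': "A \<subseteq> A'" "A' \<subseteq> {1..m}" "card A' = ?M" "accepted l q ?M A'"
      using accepted_extend_to_mhat0[OF q A] by blast
    then have fin: "finite A'" using finite_subset by blast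
    then have "A' \<in> ?N" using A' phi_iff_not_accepted by auto
    moreover have "card (S \<inter> A) \<le> card (S \<inter> A')" using A'(1) fin by (intro card_mono) auto
    ultimately show ?thesis by blast
  qed
  ultimately have "Max ((\<lambda>A. card (S \<inter> A)) ` ?N) = Max ((\<lambda>A. card (S \<inter> A)) ` ?\<AA>)"
    by (intro Max_image_eq_if_dominated) auto
  moreover have "{card (A \<inter> S) | A. A \<subseteq> {1..m} \<and> \<not> phi l q A} = (\<lambda>A. card (S \<inter> A)) ` ?N"
    by (auto simp: Int_commute)
  ultimately show ?thesis unfolding V_IP_def V_JER_def by simp
qed

end

theorem mainTheorem9:
  fixes m :: nat
    and F :: "'mu set"
    and P :: "'mu \<Rightarrow> 'x measure"
    and p :: "'x \<Rightarrow> nat \<Rightarrow> real"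
    and H :: "nat \<Rightarrow> 'mu set"
    and l :: "nat \<Rightarrow> nat \<Rightarrow> real"
    and \<alpha> :: real
  defines "H0 \<equiv> (\<lambda>\<mu>. {i \<in> {1..m}. \<mu> \<in> H i})"
  assumes prob: "\<And>\<mu>. \<mu> \<in> F \<Longrightarrow> prob_space (P \<mu>)"
    and meas: "\<And>\<mu> i. \<mu> \<in> F \<Longrightarrow> i \<in> {1..m} \<Longrightarrow> (\<lambda>x. p x i) \<in> borel_measurable (P \<mu>)"
    and prange: "\<And>x i. 0 \<le> p x i \<and> p x i \<le> 1"
    and l0: "\<And>n. n \<le> m \<Longrightarrow> l 0 n = -1"
    and l_n: "\<And>i n n'. i \<le> n \<Longrightarrow> n \<le> n' \<Longrightarrow> n' \<le> m \<Longrightarrow> l i n' \<le> l i n"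
    and l_i: "\<And>i i' n. i \<le> i' \<Longrightarrow> i' \<le> n \<Longrightarrow> n \<le> m \<Longrightarrow> l i n \<le> l i' n"
    and level: "\<And>\<mu>. \<mu> \<in> F \<Longrightarrow>
       measure (P \<mu>) {x \<in> space (P \<mu>). phi l (p x) (H0 \<mu>)} \<le> \<alpha>"
  shows "(\<forall>\<mu>\<in>F. measure (P \<mu>)
            {x \<in> space (P \<mu>). JER_event {1..mhat0 l m (p x) + 1} (Rref l m (p x)) (\<lambda>k. k - 1) (H0 \<mu>)}
          \<le> \<alpha>)
     \<and> (\<forall>x S. S \<subseteq> {1..m} \<longrightarrow>
          V_IP m (phi l (p x)) S = V_JER m {1..mhat0 l m (p x) + 1} (Rref l m (p x)) (\<lambda>k. k - 1) S)"
proof -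
  interpret critical_values m l
    using l0 l_n l_i by unfold_locales
  have p01: "range (p x) \<subseteq> {0..1}" for x using prange by auto
  have JER_le: "measure (P \<mu>) {x \<in> space (P \<mu>). JER_event {1..mhat0 l m (p x) + 1} (Rref l m (p x)) (\<lambda>k. k - 1) (H0 \<mu>)}
      \<le> \<alpha>" if \<mu>: "\<mu> \<in> F" for \<mu>
  proof -
    interpret prob_space "P \<mu>" using prob[OF \<mu>] .
    have H0: "H0 \<mu> \<subseteq> {1..m}" unfolding H0_def by auto
    then have "{x \<in> space (P \<mu>). JER_event {1..mhat0 l m (p x) + 1} (Rref l m (p x)) (\<lambda>k. k - 1) (H0 \<mu>)}
        \<subseteq> {x \<in> space (P \<mu>). phi l (p x) (H0 \<mu>)}"
      using JER_event_mhat0_iff accepted_mhat0_if_not_phi by blast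
    moreover have "{x \<in> space (P \<mu>). phi l (p x) (H0 \<mu>)} \<in> events"
      using H0 meas[OF \<mu>] finite_subset by (intro measurable_phi_event) auto
    ultimately show ?thesis using level[OF \<mu>] finite_measure_mono by (meson order_trans)
  qed
  then show ?thesis using V_IP_eq_V_JER_mhat0[OF p01] by blast
qed

end
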